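(* For every target rate $r>0$, $P_{\rm r}>0$ and $\mathcal C_x\in[0,1)$, \[ \mathcal P_{\rm sr}(P_{\rm r},\mathcal C_x)\ge 1-\frac{e^{-\frac{\Psi_r(\mathcal C_x)}{P_{\rm s}\theta_{\rm sr}}}}{\Gamma(m_{\rm rr})\theta_{\rm rr}^{m_{\rm rr}}}\sum_{m=0}^{m_{\rm sr}-1}\sum_{k=0}^{m}\binom{m}{k}\frac{P_{\rm r}^k\,\Gamma(k+m_{\rm rr})\left(\frac{\Psi_r(\mathcal C_x)}{P_{\rm s}\theta_{\rm sr}}\right)^m}{\Gamma(m+1)\left(\frac{P_{\rm r}\Psi_r(\mathcal C_x)}{P_{\rm s}\theta_{\rm sr}}+\frac1{\theta_{\rm rr}}\right)^{k+m_{\rm rr}}}=:\mathcal P^{\rm LB}_{\rm sr}(P_{\rm r},\mathcal C_x). \]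
   Context: Let $P_{\rm s}>0$, $P_{\rm r}>0$ be the source and relay transmit powers. For links $ij\in\{\mathrm{sr},\mathrm{rr},\mathrm{rd},\mathrm{sd}\}$ let $g_{ij}$ be mutually independent random channel gains, $g_{ij}$ gamma distributed with integer shape parameter $m_{ij}\ge1$ and scale $\theta_{ij}=\pi_{ij}/m_{ij}$, where $\pi_{ij}=\mathbb E[g_{ij}]>0$; i.e. $g_{ij}$ has density $x^{m_{ij}-1}e^{-x/\theta_{ij}}/(\Gamma(m_{ij})\theta_{ij}^{m_{ij}})$ for $x\ge0$. For a circularity coefficient $\mathcal C_x\in[0,1)$ define $R_{\rm sr}(P_{\rm r},\mathcal C_x)=\tfrac12\log_2\frac{(P_{\rm s}g_{\rm sr}+P_{\rm r}g_{\rm rr}+1)^2-(P_{\rm r}g_{\rm rr}\mathcal C_x)^2}{(P_{\rm r}g_{\rm rr}+1)^2-(P_{\rm r}g_{\rm rr}\mathcal C_x)^2}$. For a target rate $r>0$ put $\gamma=2^{2r}-1$ and $\Psi_r(x)=\sqrt{1+\gamma(1-x^2)}-1$. The S–R outage probability is $\mathcal P_{\rm sr}=\mathbb P\{R_{\rm sr}<r\}$. *)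

theory Defs
  imports "HOL-Probability.Probability"
begin

definition gamma_density :: "nat \<Rightarrow> real \<Rightarrow> real \<Rightarrow> real" where
  "gamma_density m \<theta> x =
     (if x < 0 then 0 else x ^ (m - 1) * exp (- x / \<theta>) / (Gamma (real m) * \<theta> ^ m))"

definition R_sr :: "real \<Rightarrow> real \<Rightarrow> real \<Rightarrow> real \<Rightarrow> real \<Rightarrow> real" where
  "R_sr Ps Pr Cx gsr grr =
     1/2 * log 2 (((Ps * gsr + Pr * grr + 1)^2 - (Pr * grr * Cx)^2) /
                  ((Pr * grr + 1)^2 - (Pr * grr * Cx)^2))"

definition Psi :: "real \<Rightarrow> real \<Rightarrow> real" where
  "Psi r x = sqrt (1 + (2 powr (2 * r) - 1) * (1 - x^2)) - 1"

definition P_sr_LB ::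
  "real \<Rightarrow> real \<Rightarrow> nat \<Rightarrow> real \<Rightarrow> nat \<Rightarrow> real \<Rightarrow> real \<Rightarrow> real \<Rightarrow> real" where
  "P_sr_LB Ps Pr m_sr \<theta>_sr m_rr \<theta>_rr r Cx =
     (let a = Psi r Cx / (Ps * \<theta>_sr) in
      1 - exp (- a) / (Gamma (real m_rr) * \<theta>_rr ^ m_rr) *
        (\<Sum>m<m_sr. \<Sum>k\<le>m. real (m choose k) * Pr ^ k * Gamma (real k + real m_rr) * a ^ m
            / (Gamma (real m + 1) * (Pr * a + 1 / \<theta>_rr) ^ (k + m_rr))))"

end

theory Submission
  imports Defs
begin

text \<open>Write \<open>\<gamma> = 2^(2r) - 1\<close> and \<open>\<Psi> = \<Psi>_r(C)\<close>, so that \<open>(1 + \<Psi>)^2 = 1 + \<gamma> (1 - C^2)\<close>.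
  This identity shows that the rate stays below \<open>r\<close> as soon as \<open>P_s g_sr < \<Psi> (1 + P_r g_rr)\<close>, so
  the outage probability is at least \<open>1 - P{c (1 + P_r g_rr) \<le> g_sr}\<close> with \<open>c = \<Psi> / P_s\<close>.
  Gamma variables of integer shape are Erlang, and the Erlang tail at the affine threshold
  \<open>c (1 + P_r y)\<close> is an exponential in \<open>y\<close> times a polynomial in \<open>y\<close>. Expanding the polynomial
  binomially and integrating each term against the Erlang density of \<open>g_rr\<close> (a Gamma integral)
  gives the double sum of the bound exactly.\<close>

lemma Psi_nonneg:
  fixes r C :: real
  assumes "0 \<le> r" "\<bar>C\<bar> \<le> 1"
  shows "0 \<le> Psi r C"
proof -
  have "1 \<le> 2 powr (2 * r)" "C\<^sup>2 \<le> 1"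
    using assms by (simp_all add: ge_one_powr_ge_zero abs_square_le_1)
  then show ?thesis
    unfolding Psi_def by simp
qed

lemma R_sr_less_rate:
  fixes Ps Pr r C x y :: real
  assumes "0 < Ps" "0 \<le> Pr" "0 \<le> r" "0 \<le> C" "C < 1" "0 \<le> x" "0 \<le> y"
    and below: "x < Psi r C / Ps * (1 + Pr * y)"
  shows "R_sr Ps Pr C x y < r"
proof -
  define \<gamma> where "\<gamma> = 2 powr (2 * r) - 1"
  define \<Psi> where "\<Psi> = Psi r C"
  define X where "X = Ps * x"
  define Y where "Y = Pr * y"
  define N where "N = (X + Y + 1)\<^sup>2 - (Y * C)\<^sup>2"
  define D where "D = (Y + 1)\<^sup>2 - (Y * C)\<^sup>2"
  have \<gamma>: "0 \<le> \<gamma>"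
    using assms(3) by (simp add: \<gamma>_def ge_one_powr_ge_zero)
  have C2: "0 \<le> C\<^sup>2" "C\<^sup>2 \<le> 1"
    using assms(4,5) by (simp_all add: power_le_one)
  have \<Psi>_sq: "(1 + \<Psi>)\<^sup>2 = 1 + \<gamma> * (1 - C\<^sup>2)"
    unfolding \<Psi>_def Psi_def \<gamma>_def[symmetric] using \<gamma> C2 by simp
  have XY: "0 \<le> X" "0 \<le> Y * C" "Y * C \<le> Y"
    using assms unfolding X_def Y_def by (simp_all add: mult_left_le)
  have X_below: "X < \<Psi> * (1 + Y)"
    using assms(1) below unfolding X_def Y_def \<Psi>_def by (simp add: field_simps)
  have D: "0 < D" and N: "0 < N"
    unfolding D_def N_def using XY by (simp_all add: power_strict_mono square_diff_square_factored)
  have "N < (\<Psi> * (1 + Y) + Y + 1)\<^sup>2 - (Y * C)\<^sup>2"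
    unfolding N_def using X_below XY by (simp add: power_strict_mono)
  also have "\<dots> = (1 + \<Psi>)\<^sup>2 * (1 + Y)\<^sup>2 - (Y * C)\<^sup>2"
    by (simp add: power2_eq_square algebra_simps)
  also have "\<dots> = (1 + \<gamma>) * D - \<gamma> * C\<^sup>2 * (1 + 2 * Y)"
    unfolding \<Psi>_sq D_def by (simp add: power2_eq_square algebra_simps)
  also have "\<dots> \<le> (1 + \<gamma>) * D"
    using \<gamma> C2 XY by simp
  finally have "N / D < 2 powr (2 * r)"
    using D by (simp add: divide_less_eq \<gamma>_def mult.commute)
  then have "log 2 (N / D) < 2 * r"
    using N D by (simp add: log_less_iff)
  then show ?thesis
    unfolding R_sr_def N_def D_def X_def Y_def by (simp add: algebra_simps)
qed

lemma gamma_density_eq_erlang_density: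
  assumes "0 < \<theta>"
  shows "gamma_density (Suc k) \<theta> = erlang_density k (1 / \<theta>)"
proof
  fix x :: real
  have "Gamma (real (Suc k)) = fact k"
    using Gamma_fact[of k] by (simp add: add.commute)
  then show "gamma_density (Suc k) \<theta> x = erlang_density k (1 / \<theta>) x"
    unfolding gamma_density_def erlang_density_def using assms
    by (simp add: field_simps power_divide)
qed

lemma (in prob_space) erlang_distributed_AE_nonneg:
  assumes "distributed M lborel X (erlang_density k l)"
  shows "AE \<omega> in M. 0 \<le> X \<omega>"
  by (subst distributed_AE2[OF assms]) (auto simp: erlang_density_def)

lemma nn_integral_erlang_density_atLeast:
  assumes "0 < l"
  shows "(\<integral>\<^sup>+x. ennreal (erlang_density k l x) * indicator {t..} x \<partial>lborel)
       = ennreal (1 - erlang_CDF k l t)"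
proof -
  let ?f = "\<lambda>x. ennreal (erlang_density k l x)"
  have total: "(\<integral>\<^sup>+x. ?f x \<partial>lborel) = 1"
    using nn_integral_erlang_ith_moment[OF assms, of k 0] by simp
  have "AE x in lborel. x \<noteq> t"
    by (rule AE_I'[of "{t}"]) auto
  then have below: "(\<integral>\<^sup>+x. ?f x * indicator {..<t} x \<partial>lborel) = ennreal (erlang_CDF k l t)"
    unfolding nn_integral_erlang_density[OF assms, symmetric]
    by (intro nn_integral_cong_AE) (auto split: split_indicator)
  have "(\<integral>\<^sup>+x. ?f x * indicator {t..} x \<partial>lborel) + ennreal (erlang_CDF k l t) = 1"
    unfolding below[symmetric] total[symmetric]
    by (subst nn_integral_add[symmetric]) (auto intro!: nn_integral_cong split: split_indicator)
  then show ?thesis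
    using assms by (metis ennreal_1 ennreal_add_diff_cancel_right ennreal_minus ennreal_neq_top erlang_CDF_nonneg)
qed

lemma erlang_survival_affine:
  fixes l c p y :: real
  assumes "0 \<le> c" "0 \<le> p" "0 \<le> y"
  shows "1 - erlang_CDF k l (c * (1 + p * y))
       = (\<Sum>n\<le>k. \<Sum>j\<le>n. real (n choose j) * (l * c) ^ n * exp (- (l * c)) / fact n * p ^ j
                          * (y ^ j * exp (- (l * c * p * y))))"
proof -
  have "\<not> c * (1 + p * y) < 0"
    using assms by (simp add: not_less)
  moreover have "exp (- l * (c * (1 + p * y))) = exp (- (l * c)) * exp (- (l * c * p * y))"
    by (simp add: exp_add[symmetric] algebra_simps)
  moreover have "(l * (c * (1 + p * y))) ^ n = (l * c) ^ n * (\<Sum>j\<le>n. real (n choose j) * p ^ j * y ^ j)" for n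
    using binomial_ring[of "p * y" 1 n] by (simp add: power_mult_distrib add.commute mult_ac)
  ultimately show ?thesis
    unfolding erlang_CDF_def
    by (simp add: sum_distrib_left sum_distrib_right sum_divide_distrib mult_ac)
qed

lemma erlang_density_mult_exp:
  fixes l b y :: real
  assumes "0 < l + b"
  shows "erlang_density k l y * exp (- (b * y)) = (l / (l + b)) ^ Suc k * erlang_density k (l + b) y"
proof (cases "y < 0")
  case False
  have "exp (- l * y) * exp (- (b * y)) = exp (- (l + b) * y)"
    by (simp add: exp_add[symmetric] algebra_simps)
  moreover have "l ^ Suc k = (l / (l + b)) ^ Suc k * (l + b) ^ Suc k"
    using assms by (simp add: power_divide)
  ultimately show ?thesis
    using False unfolding erlang_density_def by (simp only: if_False) (simp add: mult_ac)
qed (simp add: erlang_density_def)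

lemma nn_integral_erlang_density_exp_moment:
  fixes l b :: real
  assumes "0 < l" "0 \<le> b"
  shows "(\<integral>\<^sup>+y. ennreal (erlang_density k l y * (y ^ j * exp (- (b * y)))) \<partial>lborel)
       = ennreal (l ^ Suc k * fact (k + j) / (fact k * (l + b) ^ Suc (k + j)))"
proof -
  have lb: "0 < l + b" using assms by simp
  have "(\<integral>\<^sup>+y. ennreal (erlang_density k l y * (y ^ j * exp (- (b * y)))) \<partial>lborel)
      = (\<integral>\<^sup>+y. ennreal ((l / (l + b)) ^ Suc k) * ennreal (erlang_density k (l + b) y * y ^ j) \<partial>lborel)"
  proof (intro nn_integral_cong)
    fix y :: real
    have factor: "erlang_density k l y * (y ^ j * exp (- (b * y)))
        = (l / (l + b)) ^ Suc k * (erlang_density k (l + b) y * y ^ j)"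
      using erlang_density_mult_exp[OF lb, of k y] by (simp add: mult_ac)
    show "ennreal (erlang_density k l y * (y ^ j * exp (- (b * y))))
        = ennreal ((l / (l + b)) ^ Suc k) * ennreal (erlang_density k (l + b) y * y ^ j)"
      unfolding factor by (rule ennreal_mult') (use assms in simp)
  qed
  also have "\<dots> = ennreal ((l / (l + b)) ^ Suc k) * ennreal (fact (k + j) / (fact k * (l + b) ^ j))"
    by (simp add: nn_integral_cmult nn_integral_erlang_ith_moment[OF lb])
  also have "\<dots> = ennreal (l ^ Suc k * fact (k + j) / (fact k * (l + b) ^ Suc (k + j)))"
    using assms lb by (simp add: ennreal_mult'[symmetric] power_divide power_add field_simps)
  finally show ?thesis .
qed

lemma (in prob_space) emeasure_indep_threshold_le:
  fixes X Y :: "'a \<Rightarrow> real" and f g :: "real \<Rightarrow> ennreal" and h :: "real \<Rightarrow> real"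
  assumes X: "distributed M lborel X f" and Y: "distributed M lborel Y g"
    and indep: "indep_var borel X borel Y"
    and h[measurable]: "h \<in> borel_measurable borel"
  shows "emeasure M {\<omega>\<in>space M. h (Y \<omega>) \<le> X \<omega>}
       = (\<integral>\<^sup>+y. g y * (\<integral>\<^sup>+x. f x * indicator {h y..} x \<partial>lborel) \<partial>lborel)"
proof -
  have lborel2: "pair_sigma_finite lborel lborel"
    by (simp add: pair_sigma_finite_def lborel.sigma_finite_measure_axioms)
  let ?S = "{p \<in> space (lborel \<Otimes>\<^sub>M lborel). h (snd p) \<le> fst p}"
  have [measurable]: "?S \<in> sets (lborel \<Otimes>\<^sub>M lborel)"
    by measurable
  have joint: "distributed M (lborel \<Otimes>\<^sub>M lborel) (\<lambda>\<omega>. (X \<omega>, Y \<omega>)) (\<lambda>(x, y). f x * g y)"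
  proof (rule distributed_joint_indep[OF _ _ X Y])
    show "indep_var lborel X lborel Y"
      using indep unfolding indep_var_eq by simp
  qed (simp_all add: lborel.sigma_finite_measure_axioms)
  have [measurable]: "f \<in> borel_measurable borel" "g \<in> borel_measurable borel"
    using distributed_borel_measurable[OF X] distributed_borel_measurable[OF Y] by simp_all
  have "emeasure M {\<omega>\<in>space M. h (Y \<omega>) \<le> X \<omega>} = emeasure M ((\<lambda>\<omega>. (X \<omega>, Y \<omega>)) -` ?S \<inter> space M)"
    by (intro arg_cong[where f="emeasure M"]) (auto simp: space_pair_measure)
  also have "\<dots> = (\<integral>\<^sup>+p. (case p of (x, y) \<Rightarrow> f x * g y) * indicator ?S p \<partial>(lborel \<Otimes>\<^sub>M lborel))"
    by (rule distributed_emeasure[OF joint]) measurable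
  also have "\<dots> = (\<integral>\<^sup>+y. \<integral>\<^sup>+x. f x * g y * indicator ?S (x, y) \<partial>lborel \<partial>lborel)"
    by (subst pair_sigma_finite.nn_integral_snd[OF lborel2, symmetric]) (simp_all add: case_prod_beta')
  also have "\<dots> = (\<integral>\<^sup>+y. g y * (\<integral>\<^sup>+x. f x * indicator {h y..} x \<partial>lborel) \<partial>lborel)"
    by (subst nn_integral_cmult[symmetric])
       (auto intro!: nn_integral_cong simp: space_pair_measure mult_ac split: split_indicator)
  finally show ?thesis .
qed

lemma (in prob_space) prob_erlang_ge_affine_erlang:
  fixes X Y :: "'a \<Rightarrow> real"
  assumes X: "distributed M lborel X (erlang_density k1 l1)"
    and Y: "distributed M lborel Y (erlang_density k2 l2)"
    and indep: "indep_var borel X borel Y"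
    and l: "0 < l1" "0 < l2" and c: "0 \<le> c" and p: "0 \<le> p"
  shows "prob {\<omega>\<in>space M. c * (1 + p * Y \<omega>) \<le> X \<omega>}
       = (\<Sum>n\<le>k1. \<Sum>j\<le>n. real (n choose j) * (l1 * c) ^ n * exp (- (l1 * c)) / fact n * p ^ j
            * (l2 ^ Suc k2 * fact (k2 + j) / (fact k2 * (l2 + l1 * c * p) ^ Suc (k2 + j))))"
proof -
  define coef where
    "coef n j = real (n choose j) * (l1 * c) ^ n * exp (- (l1 * c)) / fact n * p ^ j" for n j
  define moment where
    "moment j = l2 ^ Suc k2 * fact (k2 + j) / (fact k2 * (l2 + l1 * c * p) ^ Suc (k2 + j))" for j
  have coef_nonneg: "0 \<le> coef n j" for n j
    using l c p by (simp add: coef_def)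
  have moment_nonneg: "0 \<le> moment j" for j
    using l c p by (simp add: moment_def)
  have "emeasure M {\<omega>\<in>space M. c * (1 + p * Y \<omega>) \<le> X \<omega>}
      = (\<integral>\<^sup>+y. ennreal (erlang_density k2 l2 y)
           * (\<integral>\<^sup>+x. ennreal (erlang_density k1 l1 x) * indicator {c * (1 + p * y)..} x \<partial>lborel) \<partial>lborel)"
    by (rule emeasure_indep_threshold_le[OF X Y indep]) simp
  also have "\<dots> = (\<integral>\<^sup>+y. ennreal (erlang_density k2 l2 y) * ennreal (1 - erlang_CDF k1 l1 (c * (1 + p * y))) \<partial>lborel)"
    by (simp add: nn_integral_erlang_density_atLeast[OF l(1)])
  also have "\<dots> = (\<integral>\<^sup>+y. (\<Sum>n\<le>k1. \<Sum>j\<le>n.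
                       ennreal (coef n j) * ennreal (erlang_density k2 l2 y * (y ^ j * exp (- (l1 * c * p * y))))) \<partial>lborel)"
  proof (intro nn_integral_cong)
    fix y :: real
    show "ennreal (erlang_density k2 l2 y) * ennreal (1 - erlang_CDF k1 l1 (c * (1 + p * y)))
        = (\<Sum>n\<le>k1. \<Sum>j\<le>n. ennreal (coef n j) * ennreal (erlang_density k2 l2 y * (y ^ j * exp (- (l1 * c * p * y)))))"
    proof (cases "y < 0")
      case False
      have "erlang_density k2 l2 y * (1 - erlang_CDF k1 l1 (c * (1 + p * y)))
          = (\<Sum>n\<le>k1. \<Sum>j\<le>n. coef n j * (erlang_density k2 l2 y * (y ^ j * exp (- (l1 * c * p * y)))))"
        using False c p by (simp add: erlang_survival_affine coef_def sum_distrib_left mult_ac)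
      moreover have "0 \<le> erlang_density k2 l2 y * (y ^ j * exp (- (l1 * c * p * y)))" for j
        using False l by simp
      ultimately show ?thesis
        using l coef_nonneg
        by (simp add: ennreal_mult'[symmetric] ennreal_mult[symmetric] sum_nonneg)
    qed (simp add: erlang_density_def)
  qed
  also have "\<dots> = (\<Sum>n\<le>k1. \<Sum>j\<le>n. ennreal (coef n j) * ennreal (moment j))"
    using l c p
    by (simp add: nn_integral_sum nn_integral_cmult nn_integral_erlang_density_exp_moment moment_def)
  also have "\<dots> = ennreal (\<Sum>n\<le>k1. \<Sum>j\<le>n. coef n j * moment j)"
    using coef_nonneg moment_nonneg by (simp add: ennreal_mult'[symmetric] sum_nonneg)
  finally have "prob {\<omega>\<in>space M. c * (1 + p * Y \<omega>) \<le> X \<omega>} = (\<Sum>n\<le>k1. \<Sum>j\<le>n. coef n j * moment j)"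
    using coef_nonneg moment_nonneg by (simp add: emeasure_eq_measure sum_nonneg)
  then show ?thesis
    unfolding coef_def moment_def .
qed

lemma P_sr_LB_eq_erlang:
  fixes l1 l2 c Ps Pr r Cx :: real
  assumes "0 < l1" "0 < l2" "0 < Ps" and c: "c = Psi r Cx / Ps"
  shows "P_sr_LB Ps Pr (Suc k1) (1 / l1) (Suc k2) (1 / l2) r Cx
       = 1 - (\<Sum>n\<le>k1. \<Sum>j\<le>n. real (n choose j) * (l1 * c) ^ n * exp (- (l1 * c)) / fact n * Pr ^ j
               * (l2 ^ Suc k2 * fact (k2 + j) / (fact k2 * (l2 + l1 * c * Pr) ^ Suc (k2 + j))))"
proof -
  have a: "Psi r Cx / (Ps * (1 / l1)) = l1 * c"
    using assms by (simp add: c)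
  have "Gamma (real (Suc k2)) = fact k2" "Gamma (real j + real (Suc k2)) = fact (k2 + j)"
    "Gamma (real n + 1) = fact n" for j n
    using Gamma_fact[of k2] Gamma_fact[of "k2 + j"] Gamma_fact[of n] by (simp_all add: add_ac)
  moreover have "Pr * (l1 * c) + 1 / (1 / l2) = l2 + l1 * c * Pr"
    by simp
  ultimately show ?thesis
    using assms(1,2)
    unfolding P_sr_LB_def Let_def a lessThan_Suc_atMost
    by (simp add: sum_distrib_left field_simps power_one_over)
qed

theorem lemma3:
  fixes M :: "'a measure"
    and g_sr g_rr :: "'a \<Rightarrow> real"
    and Ps Pr r Cx \<pi>_sr \<pi>_rr :: real
    and m_sr m_rr :: nat
  assumes "prob_space M"
    and "Ps > 0" and "Pr > 0" and "r > 0"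
    and "0 \<le> Cx" and "Cx < 1"
    and "m_sr \<ge> 1" and "m_rr \<ge> 1"
    and "\<pi>_sr > 0" and "\<pi>_rr > 0"
    and "distributed M lborel g_sr (gamma_density m_sr (\<pi>_sr / real m_sr))"
    and "distributed M lborel g_rr (gamma_density m_rr (\<pi>_rr / real m_rr))"
    and "prob_space.indep_var M borel g_sr borel g_rr"
  shows "measure M {\<omega> \<in> space M. R_sr Ps Pr Cx (g_sr \<omega>) (g_rr \<omega>) < r}
         \<ge> P_sr_LB Ps Pr m_sr (\<pi>_sr / real m_sr) m_rr (\<pi>_rr / real m_rr) r Cx"
proof -
  interpret prob_space M by fact
  obtain k1 k2 where m: "m_sr = Suc k1" "m_rr = Suc k2"
    using assms(7,8) by (metis One_nat_def Suc_le_D)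
  define l1 l2 where "l1 = real m_sr / \<pi>_sr" and "l2 = real m_rr / \<pi>_rr"
  have l: "0 < l1" "0 < l2" and \<theta>: "\<pi>_sr / real m_sr = 1 / l1" "\<pi>_rr / real m_rr = 1 / l2"
    using assms(9,10) by (simp_all add: l1_def l2_def m)
  have X: "distributed M lborel g_sr (erlang_density k1 l1)"
    and Y: "distributed M lborel g_rr (erlang_density k2 l2)"
    using assms(11,12) l unfolding \<theta> unfolding m by (simp_all add: gamma_density_eq_erlang_density)
  have [measurable]: "g_sr \<in> borel_measurable M" "g_rr \<in> borel_measurable M"
    using distributed_measurable[OF X] distributed_measurable[OF Y] by simp_all
  define c where "c = Psi r Cx / Ps"
  have c: "0 \<le> c"
    using assms(2,4-6) Psi_nonneg[of r Cx] by (simp add: c_def)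
  let ?Out = "{\<omega> \<in> space M. R_sr Ps Pr Cx (g_sr \<omega>) (g_rr \<omega>) < r}"
  let ?B = "{\<omega> \<in> space M. c * (1 + Pr * g_rr \<omega>) \<le> g_sr \<omega>}"
  have "AE \<omega> in M. \<omega> \<in> space M - ?B \<longrightarrow> \<omega> \<in> ?Out"
    using erlang_distributed_AE_nonneg[OF X] erlang_distributed_AE_nonneg[OF Y]
  proof eventually_elim
    case (elim \<omega>)
    show ?case
      using R_sr_less_rate[OF assms(2) _ _ assms(5,6) elim] assms(3,4) by (auto simp: c_def not_le)
  qed
  then have "prob (space M - ?B) \<le> prob ?Out"
    by (rule finite_measure_mono_AE) (unfold R_sr_def, measurable)
  moreover have "prob (space M - ?B) = 1 - prob ?B"
    by (rule prob_compl) measurable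
  moreover have "P_sr_LB Ps Pr m_sr (\<pi>_sr / real m_sr) m_rr (\<pi>_rr / real m_rr) r Cx = 1 - prob ?B"
    unfolding \<theta> unfolding m P_sr_LB_eq_erlang[OF l assms(2) c_def]
    by (simp only: prob_erlang_ge_affine_erlang[OF X Y assms(13) l c less_imp_le[OF assms(3)]])
  ultimately show ?thesis
    by linarith
qed
end
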